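(* Let $i\in\omega$ and let $u\le_{\mathrm{lex}}v\le_{\mathrm{lex}}w\le_{\mathrm{lex}}z$ be mutually compatible words in $\Sigma^*$, all of length $i$. 1. If $v\prec w$, then (a) at least one of $u\prec w$ and $u\perp v$ holds, and (b) at least one of $v\prec z$ and $w\perp z$ holds. 2. If $u\perp z$ and $u<_{\mathrm{lex}}v<_{\mathrm{lex}}z$, then at least one of $u\perp v$ and $v\perp z$ holds.
   Context: $\Sigma=\{\mathrm L,\mathrm X,\mathrm R\}$ ordered $\mathrm L<_{\mathrm{lex}}\mathrm X<_{\mathrm{lex}}\mathrm R$; $\Sigma^*$ is the set of finite words over $\Sigma$ (characters indexed from $0$), $\le_{\mathrm{lex}}$ the lexicographic order, $|w|$ the length. For $w,w'\in\Sigma^*$: $w\prec w'$ iff there is $i<\min(|w|,|w'|)$ with $(w_i,w'_i)=(\mathrm L,\mathrm R)$ and $w_j\le_{\mathrm{lex}}w'_j$ for all $j<i$. $w\perp w'$ iff there are $i,j<\min(|w|,|w'|)$ with $w_i<_{\mathrm{lex}}w'_i$ and $w'_j<_{\mathrm{lex}}w_j$. Words $u\le_{\mathrm{lex}}v$ are compatible if there is no $i<\min(|u|,|v|)$ with $(u_i,v_i)=(\mathrm R,\mathrm L)$, and, if there exists $j<\min(|u|,|v|)$ with $(u_j,v_j)=(\mathrm L,\mathrm R)$, then $u\prec v$ and $u\not\perp v$. *)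

theory Defs
  imports Main
begin

datatype sym = L | X | R

definition rank :: "sym \<Rightarrow> nat" where
  "rank s = (case s of L \<Rightarrow> 0 | X \<Rightarrow> 1 | R \<Rightarrow> 2)"

definition sym_less :: "sym \<Rightarrow> sym \<Rightarrow> bool" where
  "sym_less a b \<longleftrightarrow> rank a < rank b"

definition sym_le :: "sym \<Rightarrow> sym \<Rightarrow> bool" where
  "sym_le a b \<longleftrightarrow> rank a \<le> rank b"

type_synonym word = "sym list"

definition lex_less :: "word \<Rightarrow> word \<Rightarrow> bool" where
  "lex_less w w' \<longleftrightarrow>
     (length w < length w' \<and> take (length w) w' = w) \<or>
     (\<exists>i < min (length w) (length w'). sym_less (w ! i) (w' ! i) \<and>
        (\<forall>j < i. w ! j = w' ! j))"

definition lex_le :: "word \<Rightarrow> word \<Rightarrow> bool" where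
  "lex_le w w' \<longleftrightarrow> w = w' \<or> lex_less w w'"

definition prec :: "word \<Rightarrow> word \<Rightarrow> bool" where
  "prec w w' \<longleftrightarrow> (\<exists>i < min (length w) (length w').
      w ! i = L \<and> w' ! i = R \<and> (\<forall>j < i. sym_le (w ! j) (w' ! j)))"

definition perp :: "word \<Rightarrow> word \<Rightarrow> bool" where
  "perp w w' \<longleftrightarrow> (\<exists>i < min (length w) (length w'). \<exists>j < min (length w) (length w').
      sym_less (w ! i) (w' ! i) \<and> sym_less (w' ! j) (w ! j))"

definition compatible_ord :: "word \<Rightarrow> word \<Rightarrow> bool" where
  "compatible_ord u v \<longleftrightarrow>
     \<not> (\<exists>i < min (length u) (length v). u ! i = R \<and> v ! i = L) \<and>
     ((\<exists>j < min (length u) (length v). u ! j = L \<and> v ! j = R) \<longrightarrow>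
        prec u v \<and> \<not> perp u v)"

definition compatible :: "word \<Rightarrow> word \<Rightarrow> bool" where
  "compatible u v \<longleftrightarrow> (if lex_le u v then compatible_ord u v else compatible_ord v u)"

end

theory Submission
  imports Defs
begin

text \<open>For words of equal length with \<open>a \<le>lex b\<close>, not being \<open>\<perp>\<close> means that \<open>a\<close> lies letterwise
  below \<open>b\<close>. Compatibility is needed only to get
  \<open>v \<not>\<perp> w\<close> from \<open>v \<prec> w\<close>; part 2 uses the lexicographic order alone.\<close>

definition letterwise_le :: "word \<Rightarrow> word \<Rightarrow> bool" where
  "letterwise_le a b \<longleftrightarrow> (\<forall>j < length a. sym_le (a ! j) (b ! j))"

lemma not_perp_imp_letterwise_le:
  assumes "length a = length b" "\<not> perp a b"
  shows "letterwise_le a b \<or> letterwise_le b a"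
  using assms unfolding perp_def letterwise_le_def sym_le_def sym_less_def
  by (metis min.idem not_le)

lemma letterwise_le_lex_le_imp_eq:
  assumes "length a = length b" "letterwise_le a b" "lex_le b a"
  shows "a = b"
proof (rule ccontr)
  assume "a \<noteq> b"
  then have "lex_less b a" using assms(3) unfolding lex_le_def by auto
  then obtain i where "i < length a" "sym_less (b ! i) (a ! i)"
    using assms(1) unfolding lex_less_def by auto
  then show False
    using assms(2) unfolding letterwise_le_def sym_le_def sym_less_def by fastforce
qed

lemma not_perp_lex_le_imp_letterwise_le:
  assumes "length a = length b" "\<not> perp a b" "lex_le a b"
  shows "letterwise_le a b"
  using not_perp_imp_letterwise_le[OF assms(1,2)] letterwise_le_lex_le_imp_eq[of b a] assms
  unfolding letterwise_le_def sym_le_def by auto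

lemma letterwise_le_imp_not_perp:
  assumes "length a = length b" "letterwise_le a b"
  shows "\<not> perp a b"
  using assms unfolding perp_def letterwise_le_def sym_le_def sym_less_def by fastforce

lemma letterwise_le_trans:
  "length a = length b \<Longrightarrow> letterwise_le a b \<Longrightarrow> letterwise_le b c \<Longrightarrow> letterwise_le a c"
  unfolding letterwise_le_def sym_le_def by (metis le_trans)

lemma letterwise_le_L:
  assumes "letterwise_le a b" "k < length a" "b ! k = L"
  shows "a ! k = L"
  using assms unfolding letterwise_le_def sym_le_def rank_def by (cases "a ! k") auto

lemma letterwise_le_R:
  assumes "letterwise_le a b" "k < length a" "a ! k = R"
  shows "b ! k = R"
  using assms unfolding letterwise_le_def sym_le_def rank_def by (cases "b ! k") auto

lemma letterwise_le_imp_prec: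
  assumes "length a = length b" "letterwise_le a b" "k < length a" "a ! k = L" "b ! k = R"
  shows "prec a b"
  using assms unfolding prec_def letterwise_le_def by auto

lemma compatible_prec_imp_not_perp:
  assumes "compatible a b" "lex_le a b" "prec a b"
  shows "\<not> perp a b"
  using assms unfolding compatible_def compatible_ord_def prec_def by auto

theorem proposition1:
  fixes i :: nat and u v w z :: word
  assumes len: "length u = i" "length v = i" "length w = i" "length z = i"
    and ord: "lex_le u v" "lex_le v w" "lex_le w z"
    and comp: "\<forall>a\<in>{u, v, w, z}. \<forall>b\<in>{u, v, w, z}. compatible a b"
  shows "(prec v w \<longrightarrow> (prec u w \<or> perp u v) \<and> (prec v z \<or> perp w z)) \<and>
         (perp u z \<and> lex_less u v \<and> lex_less v z \<longrightarrow> perp u v \<or> perp v z)"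
proof (intro conjI impI)
  assume vw_prec: "prec v w"
  then obtain k where k: "k < i" "v ! k = L" "w ! k = R"
    using len unfolding prec_def by auto
  have "\<not> perp v w"
    using compatible_prec_imp_not_perp[OF _ ord(2) vw_prec] comp by simp
  then have vw: "letterwise_le v w"
    using not_perp_lex_le_imp_letterwise_le ord(2) len by simp
  show "prec u w \<or> perp u v"
  proof (rule disjCI)
    assume "\<not> perp u v"
    then have uv: "letterwise_le u v"
      using not_perp_lex_le_imp_letterwise_le ord(1) len by simp
    show "prec u w"
      using letterwise_le_imp_prec letterwise_le_L[OF uv] letterwise_le_trans[OF _ uv vw] k len
      by simp
  qed
  show "prec v z \<or> perp w z"
  proof (rule disjCI)
    assume "\<not> perp w z"
    then have wz: "letterwise_le w z"
      using not_perp_lex_le_imp_letterwise_le ord(3) len by simp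
    show "prec v z"
      using letterwise_le_imp_prec letterwise_le_R[OF wz] letterwise_le_trans[OF _ vw wz] k len
      by simp
  qed
next
  assume h: "perp u z \<and> lex_less u v \<and> lex_less v z"
  show "perp u v \<or> perp v z"
  proof (rule ccontr)
    assume "\<not> (perp u v \<or> perp v z)"
    then have "letterwise_le u v" "letterwise_le v z"
      using not_perp_lex_le_imp_letterwise_le h len unfolding lex_le_def by auto
    then have "letterwise_le u z" using letterwise_le_trans len by metis
    then show False using letterwise_le_imp_not_perp h len by simp
  qed
qed

end
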